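(* Let $E^{II}_m(q;x,y)=\sum_{T\in\mathcal{T}^{II}_m}x^{l(T)}y^{u(T)}q^{\operatorname{inv}(T)}$ for $m\ge1$ and set $E^{II}_0(q;x,y)=x$. Then for all $n\ge1$, \[ E^{II}_{n+1}(q;x,y)=y\,E^{II}_n(q;x,y)+\sum_{k=0}^{n-2}q^{2(n-k-1)}{n-1\brack k}_q\,E^{II}_{k+1}(q;x,y)\,E^{II}_{n-k-1}(q;x,y). \]
   Context: An increasing binary tree on $[m]$ is a rooted tree on $\{1,\dots,m\}$ with labels increasing along paths from the root, each vertex having at most one (distinguished) left child and at most one right child. $\mathcal{T}^{II}_m$ is the set of André II trees on $[m]$: increasing binary trees in which, for every vertex with at least one child, the minimum label of the left subtree is greater than the minimum label of the right subtree (minimum of the empty tree $=+\infty$). $l(T)$ is the number of leaves, $u(T)$ the number of vertices with exactly one child. An inversion of $T$ is a pair $(i,j)$ of vertices with $i>j$ such that either (1) $j$ belongs to the right subtree of some vertex $v$ on the path from the root to $i$ whose left child is on that path; or (2) $j$ is on the path from the root to $i$ and the left child of $j$ is on that path; $\operatorname{inv}(T)$ counts inversions. ${n\brack k}_q=\frac{(q;q)_n}{(q;q)_k(q;q)_{n-k}}$, $(q;q)_n=\prod_{i=1}^n(1-q^i)$. *)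

theory Defs
  imports Main "HOL-Library.Tree" "HOL-Library.Extended_Nat"
    "HOL-Computational_Algebra.Polynomial"
begin

fun increasing :: "nat tree \<Rightarrow> bool" where
  "increasing Leaf = True"
| "increasing (Node l a r) =
     (increasing l \<and> increasing r \<and> (\<forall>x \<in> set_tree l \<union> set_tree r. a < x))"

definition inc_bin_trees :: "nat \<Rightarrow> nat tree set" where
  "inc_bin_trees m = {T. increasing T \<and> set_tree T = {1..m} \<and> size T = m}"

definition minlab :: "nat tree \<Rightarrow> enat" where
  "minlab t = (if t = Leaf then \<infinity> else enat (Min (set_tree t)))"

definition andre2 :: "nat tree \<Rightarrow> bool" where
  "andre2 T = (\<forall>l a r. Node l a r \<in> subtrees T \<longrightarrow> (l \<noteq> Leaf \<or> r \<noteq> Leaf)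
                 \<longrightarrow> minlab r < minlab l)"

definition andre_II_trees :: "nat \<Rightarrow> nat tree set" where
  "andre_II_trees m = {T \<in> inc_bin_trees m. andre2 T}"

fun leaves :: "nat tree \<Rightarrow> nat" where
  "leaves Leaf = 0"
| "leaves (Node l a r) = (if l = Leaf \<and> r = Leaf then 1 else 0) + leaves l + leaves r"

fun unary :: "nat tree \<Rightarrow> nat" where
  "unary Leaf = 0"
| "unary (Node l a r) = (if (l = Leaf) \<noteq> (r = Leaf) then 1 else 0) + unary l + unary r"

text \<open>Inversions (i,j), i > j: (1) there is a vertex v whose left subtree contains i
  (i.e. v is on the root-to-i path with its left child on that path) and whose right
  subtree contains j; or (2) j is on the root-to-i path with its left child on that
  path, i.e. i lies in the left subtree of j.\<close>
definition inversions :: "nat tree \<Rightarrow> (nat \<times> nat) set" where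
  "inversions T = {(i, j). j < i \<and>
      ((\<exists>l v r. Node l v r \<in> subtrees T \<and> i \<in> set_tree l \<and> j \<in> set_tree r) \<or>
       (\<exists>l r. Node l j r \<in> subtrees T \<and> i \<in> set_tree l))}"

definition inv :: "nat tree \<Rightarrow> nat" where
  "inv T = card (inversions T)"

definition qpoch :: "nat \<Rightarrow> 'a::field poly" where
  "qpoch n = (\<Prod>i=1..n. 1 - [:0, 1:] ^ i)"

definition qbinom :: "nat \<Rightarrow> nat \<Rightarrow> 'a::field poly" where
  "qbinom n k = qpoch n div (qpoch k * qpoch (n - k))"

text \<open>E^{II}_m(q;x,y) with q the polynomial variable; E_0 = x.\<close>
definition E2 :: "nat \<Rightarrow> 'a::field poly \<Rightarrow> 'a poly \<Rightarrow> 'a poly" where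
  "E2 m x y = (if m = 0 then x else
     (\<Sum>T\<in>andre_II_trees m. x ^ leaves T * y ^ unary T * [:0, 1:] ^ inv T))"

end

(*
  Deleting the root 1 of an Andre II tree on {1..n+1} leaves a left subtree on some
  A \<subseteq> {2..n+1} and a right subtree on the complement, and the Andre condition at the
  root says exactly that the label 2 goes to the right.  For A = {} this gives the term
  y E_n.  Otherwise every label of A forms an inversion with the root and with 2, which
  gives q^(2|A|), and the remaining inversions between A and {3..n+1} - A, summed over
  all A of size j, give the Gaussian binomial [n-1 choose j]_q by the q-Pascal
  recurrence.  Reflecting j = n - 1 - k yields the stated sum.

  To apply this to subtrees, the generating function is defined for trees on an arbitrary
  finite label set S.  The same decomposition expresses it through the values on proper
  subsets and their cardinalities only, so by induction it depends on card S alone.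
*)
theory Submission
  imports Defs
begin

definition andre_II_trees_on :: "nat set \<Rightarrow> nat tree set" where
  "andre_II_trees_on S = {T. increasing T \<and> set_tree T = S \<and> size T = card S \<and> andre2 T}"

definition tree_weight :: "'a::field poly \<Rightarrow> 'a poly \<Rightarrow> nat tree \<Rightarrow> 'a poly" where
  "tree_weight x y T = x ^ leaves T * y ^ unary T * [:0, 1:] ^ inv T"

definition E2_on :: "nat set \<Rightarrow> 'a::field poly \<Rightarrow> 'a poly \<Rightarrow> 'a poly" where
  "E2_on S x y = (\<Sum>T\<in>andre_II_trees_on S. tree_weight x y T)"

lemma E2_eq_E2_on: "m \<ge> 1 \<Longrightarrow> E2 m x y = E2_on {1..m} x y"
  by (simp add: E2_def E2_on_def tree_weight_def andre_II_trees_def inc_bin_trees_def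
      andre_II_trees_on_def)

lemma size_eq_card_set_tree_iff: "size t = card (set_tree t) \<longleftrightarrow> distinct (inorder t)"
  by (metis card_distinct distinct_card length_inorder set_inorder)

lemma andre2_Node_iff:
  "andre2 (Node l a r) \<longleftrightarrow>
     andre2 l \<and> andre2 r \<and> ((l \<noteq> Leaf \<or> r \<noteq> Leaf) \<longrightarrow> minlab r < minlab l)"
  unfolding andre2_def by auto

lemma andre_II_trees_on_empty [simp]: "andre_II_trees_on {} = {Leaf}"
  by (auto simp: andre_II_trees_on_def andre2_def)

lemma Leaf_in_andre_II_trees_on_iff [simp]: "Leaf \<in> andre_II_trees_on S \<longleftrightarrow> S = {}"
  by (auto simp: andre_II_trees_on_def andre2_def)

lemma Node_in_andre_II_trees_on_iff:
  "Node l a r \<in> andre_II_trees_on S \<longleftrightarrow>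
     l \<in> andre_II_trees_on (set_tree l) \<and> r \<in> andre_II_trees_on (set_tree r) \<and>
     S = insert a (set_tree l \<union> set_tree r) \<and> (\<forall>b \<in> set_tree l \<union> set_tree r. a < b) \<and>
     set_tree l \<inter> set_tree r = {} \<and> ((l \<noteq> Leaf \<or> r \<noteq> Leaf) \<longrightarrow> minlab r < minlab l)"
proof -
  have "T \<in> andre_II_trees_on S \<longleftrightarrow>
      increasing T \<and> set_tree T = S \<and> distinct (inorder T) \<and> andre2 T" for T S
    using size_eq_card_set_tree_iff[of T] by (auto simp: andre_II_trees_on_def)
  then show ?thesis
    by (auto simp: andre2_Node_iff)
qed

lemma minlab_andre_II_trees_on:
  "T \<in> andre_II_trees_on S \<Longrightarrow> minlab T = (if S = {} then \<infinity> else enat (Min S))"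
  by (auto simp: andre_II_trees_on_def minlab_def)

lemma andre_root_condition_iff:
  assumes "finite U" "A \<subseteq> U"
    and "l \<in> andre_II_trees_on A" "r \<in> andre_II_trees_on (U - A)"
  shows "((l \<noteq> Leaf \<or> r \<noteq> Leaf) \<longrightarrow> minlab r < minlab l) \<longleftrightarrow> A \<subseteq> U - {Min U}"
proof (cases "A = {}")
  case True
  then show ?thesis
    using assms(3,4) by (auto simp: minlab_andre_II_trees_on)
next
  case False
  have fin: "finite A" "finite (U - A)"
    using assms(1,2) finite_subset by auto
  have "U \<noteq> {}"
    using False assms(2) by auto
  then have "Min U \<in> U" "\<forall>b \<in> U. Min U \<le> b"
    using assms(1) by auto
  moreover have "Min A \<in> A" "Min A \<in> U"
    using Min_in[OF fin(1) False] assms(2) by auto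
  ultimately have "(U - A \<noteq> {} \<and> Min (U - A) < Min A) \<longleftrightarrow> Min U \<notin> A"
    using fin False
    by (metis Diff_iff Min_le Min_eq_iff empty_iff leD order.not_eq_order_implies_strict)
  moreover have "((l \<noteq> Leaf \<or> r \<noteq> Leaf) \<longrightarrow> minlab r < minlab l) \<longleftrightarrow>
      (U - A \<noteq> {} \<and> Min (U - A) < Min A)"
    using False assms(3,4) by (auto simp: minlab_andre_II_trees_on)
  ultimately show ?thesis
    using assms(2) by blast
qed

lemma andre_II_trees_on_split:
  assumes "finite S" "S \<noteq> {}"
  defines "U \<equiv> S - {Min S}"
  shows "andre_II_trees_on S = (\<Union>A \<in> Pow (U - {Min U}).
    (\<lambda>(l, r). Node l (Min S) r) ` (andre_II_trees_on A \<times> andre_II_trees_on (U - A)))"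
proof (intro equalityI subsetI)
  fix T assume T: "T \<in> andre_II_trees_on S"
  then obtain l a r where lar: "T = Node l a r"
    using assms(2) by (cases T) auto
  have S: "S = insert a (set_tree l \<union> set_tree r)" and a: "\<forall>b \<in> set_tree l \<union> set_tree r. a < b"
    and disj: "set_tree l \<inter> set_tree r = {}"
    using T by (auto simp: lar Node_in_andre_II_trees_on_iff)
  have "a = Min S"
    using assms(1) S a by (intro Min_eqI[symmetric]) (auto intro: less_imp_le)
  then have U: "U = set_tree l \<union> set_tree r" "U - set_tree l = set_tree r"
    using S a disj by (auto simp: U_def)
  have lr: "(l, r) \<in> andre_II_trees_on (set_tree l) \<times> andre_II_trees_on (U - set_tree l)"
    using T by (simp add: lar U(2) Node_in_andre_II_trees_on_iff)
  moreover have "set_tree l \<in> Pow (U - {Min U})"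
  proof -
    have "finite U"
      using assms(1) by (simp add: U_def)
    moreover have "(l \<noteq> Leaf \<or> r \<noteq> Leaf) \<longrightarrow> minlab r < minlab l"
      using T by (simp add: lar Node_in_andre_II_trees_on_iff)
    ultimately show ?thesis
      using andre_root_condition_iff[of U "set_tree l" l r] U(1) lr by blast
  qed
  ultimately show "T \<in> (\<Union>A \<in> Pow (U - {Min U}).
      (\<lambda>(l, r). Node l (Min S) r) ` (andre_II_trees_on A \<times> andre_II_trees_on (U - A)))"
    by (force simp: lar \<open>a = Min S\<close>)
next
  fix T assume "T \<in> (\<Union>A \<in> Pow (U - {Min U}).
      (\<lambda>(l, r). Node l (Min S) r) ` (andre_II_trees_on A \<times> andre_II_trees_on (U - A)))"
  then obtain A l r where A: "A \<subseteq> U - {Min U}" and T: "T = Node l (Min S) r"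
    and l: "l \<in> andre_II_trees_on A" and r: "r \<in> andre_II_trees_on (U - A)"
    by auto
  have "finite U"
    using assms(1) by (simp add: U_def)
  have sets: "set_tree l = A" "set_tree r = U - A"
    using l r by (simp_all add: andre_II_trees_on_def)
  have "\<forall>b \<in> U. Min S < b"
    using assms(1) by (auto simp: U_def order.not_eq_order_implies_strict)
  moreover have "S = insert (Min S) (A \<union> (U - A))"
    using Min_in[OF assms(1,2)] A by (auto simp: U_def)
  moreover have "(l \<noteq> Leaf \<or> r \<noteq> Leaf) \<longrightarrow> minlab r < minlab l"
    using andre_root_condition_iff[OF \<open>finite U\<close> _ l r] A by blast
  ultimately show "T \<in> andre_II_trees_on S"
    using A l r by (auto simp: T sets Node_in_andre_II_trees_on_iff)
qed

lemma finite_andre_II_trees_on: "finite S \<Longrightarrow> finite (andre_II_trees_on S)"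
proof (induction "card S" arbitrary: S rule: less_induct)
  case less
  show ?case
  proof (cases "S = {}")
    case False
    define U where "U = S - {Min S}"
    have "U \<subset> S"
      using Min_in[OF less.prems False] by (auto simp: U_def)
    have "finite U"
      using less.prems by (simp add: U_def)
    have "finite (andre_II_trees_on A) \<and> finite (andre_II_trees_on (U - A))" if "A \<subseteq> U" for A
    proof -
      have "finite A" "finite (U - A)"
        using that \<open>finite U\<close> finite_subset by auto
      moreover have "card A < card S" "card (U - A) < card S"
        using that \<open>U \<subset> S\<close> less.prems
        by (meson Diff_subset finite_subset psubset_card_mono subset_psubset_trans)+
      ultimately show ?thesis
        using less.hyps by blast
    qed
    then show ?thesis
      unfolding andre_II_trees_on_split[OF less.prems False, folded U_def]
      using \<open>finite U\<close> by (auto dest: finite_subset[OF _ \<open>finite U\<close>])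
  qed simp
qed

lemma inversions_Leaf [simp]: "inversions Leaf = {}"
  by (simp add: inversions_def)

lemma inversions_Node:
  "inversions (Node l a r) = inversions l \<union> inversions r \<union>
     {(i, j). i \<in> set_tree l \<and> j \<in> set_tree r \<and> j < i} \<union> (\<lambda>i. (i, a)) ` {i \<in> set_tree l. a < i}"
  unfolding inversions_def by auto

lemma inversions_subset: "inversions t \<subseteq> set_tree t \<times> set_tree t"
  by (induction t) (auto simp: inversions_Node)

lemma finite_inversions [simp]: "finite (inversions t)"
  by (rule finite_subset[OF inversions_subset]) simp

definition cross_inv :: "nat set \<Rightarrow> nat set \<Rightarrow> nat" where
  "cross_inv A B = card {(i, j). i \<in> A \<and> j \<in> B \<and> j < i}"

lemma finite_cross_pairs:
  "finite A \<Longrightarrow> finite {(i, j). i \<in> A \<and> j \<in> B \<and> j < (i::nat)}"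
  by (rule finite_subset[of _ "A \<times> {..<Max A}"]) (auto dest: Max_ge)

lemma inv_Node:
  assumes "set_tree l \<inter> set_tree r = {}" "\<forall>i \<in> set_tree l. a < i" "a \<notin> set_tree r"
  shows "inv (Node l a r) = inv l + inv r + cross_inv (set_tree l) (set_tree r) + card (set_tree l)"
proof -
  let ?X = "{(i, j). i \<in> set_tree l \<and> j \<in> set_tree r \<and> j < i}"
  let ?Y = "(\<lambda>i. (i, a)) ` set_tree l"
  have Y: "{i \<in> set_tree l. a < i} = set_tree l"
    using assms(2) by auto
  have "inversions l \<inter> inversions r = {}" "(inversions l \<union> inversions r) \<inter> ?X = {}"
    "(inversions l \<union> inversions r \<union> ?X) \<inter> ?Y = {}"
    using inversions_subset[of l] inversions_subset[of r] assms by auto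
  then have "card (inversions (Node l a r)) = card (inversions l) + card (inversions r) + card ?X + card ?Y"
    unfolding inversions_Node Y
    by (simp add: card_Un_disjoint finite_cross_pairs)
  moreover have "card ?Y = card (set_tree l)"
    by (simp add: card_image inj_on_def)
  ultimately show ?thesis
    by (simp add: inv_def cross_inv_def)
qed

lemma tree_weight_Node_Leaf:
  "r \<noteq> Leaf \<Longrightarrow> tree_weight x y (Node Leaf a r) = y * tree_weight x y r"
  by (simp add: tree_weight_def inv_def inversions_Node)

lemma tree_weight_Node:
  assumes "l \<noteq> Leaf" "r \<noteq> Leaf"
    and "set_tree l \<inter> set_tree r = {}" "\<forall>i \<in> set_tree l. a < i" "a \<notin> set_tree r"
  shows "tree_weight x y (Node l a r) =
    [:0, 1:] ^ (cross_inv (set_tree l) (set_tree r) + card (set_tree l)) *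
      tree_weight x y l * tree_weight x y r"
  using assms by (simp add: tree_weight_def inv_Node[OF assms(3-5)] power_add algebra_simps)

lemma E2_on_singleton: "E2_on {a} x y = x"
  by (simp add: E2_on_def andre_II_trees_on_split[of "{a}"] tree_weight_def inv_def
      inversions_Node)

lemma cross_inv_insert_left:
  assumes "finite A" "c \<notin> A"
  shows "cross_inv (insert c A) B = cross_inv A B + card {j \<in> B. j < c}"
proof -
  let ?X = "{(i, j). i \<in> A \<and> j \<in> B \<and> j < i}"
  let ?Y = "Pair c ` {j \<in> B. j < c}"
  have "{(i, j). i \<in> insert c A \<and> j \<in> B \<and> j < i} = ?X \<union> ?Y"
    by auto
  moreover have "?X \<inter> ?Y = {}"
    using assms(2) by auto
  moreover have "card ?Y = card {j \<in> B. j < c}"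
    by (rule card_image) (simp add: inj_on_def)
  ultimately show ?thesis
    unfolding cross_inv_def using assms(1) by (simp add: card_Un_disjoint finite_cross_pairs)
qed

lemma cross_inv_insert_right:
  assumes "finite A" "c \<notin> B"
  shows "cross_inv A (insert c B) = cross_inv A B + card {i \<in> A. c < i}"
proof -
  let ?X = "{(i, j). i \<in> A \<and> j \<in> B \<and> j < i}"
  let ?Y = "(\<lambda>i. (i, c)) ` {i \<in> A. c < i}"
  have "{(i, j). i \<in> A \<and> j \<in> insert c B \<and> j < i} = ?X \<union> ?Y"
    by auto
  moreover have "?X \<inter> ?Y = {}"
    using assms(2) by auto
  moreover have "card ?Y = card {i \<in> A. c < i}"
    by (rule card_image) (simp add: inj_on_def)
  ultimately show ?thesis
    unfolding cross_inv_def using assms(1) by (simp add: card_Un_disjoint finite_cross_pairs)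
qed

lemma qpoch_0 [simp]: "qpoch 0 = 1"
  by (simp add: qpoch_def)

lemma qpoch_Suc: "qpoch (Suc m) = qpoch m * (1 - [:0, 1:] ^ Suc m)"
  by (simp add: qpoch_def prod.cl_ivl_Suc)

lemma qpoch_nonzero: "(qpoch m :: 'a::field poly) \<noteq> 0"
proof (induction m)
  case (Suc m)
  have "poly (1 - [:0, 1:] ^ Suc m :: 'a poly) 0 \<noteq> 0"
    by simp
  then have "(1 - [:0, 1:] ^ Suc m :: 'a poly) \<noteq> 0"
    by (metis poly_0)
  then show ?case
    using Suc by (simp add: qpoch_Suc)
qed simp

definition subset_inv_gf :: "nat set \<Rightarrow> nat \<Rightarrow> 'a::field poly" where
  "subset_inv_gf C j = (\<Sum>A | A \<subseteq> C \<and> card A = j. [:0, 1:] ^ cross_inv A (C - A))"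

lemma subset_inv_gf_0 [simp]: "finite C \<Longrightarrow> subset_inv_gf C 0 = 1"
proof -
  assume "finite C"
  then have "{A. A \<subseteq> C \<and> card A = 0} = {{}}"
    by (auto dest: finite_subset)
  then show ?thesis
    by (simp add: subset_inv_gf_def cross_inv_def)
qed

lemma subset_inv_gf_card [simp]: "finite C \<Longrightarrow> subset_inv_gf C (card C) = 1"
proof -
  assume "finite C"
  then have "{A. A \<subseteq> C \<and> card A = card C} = {C}"
    by (auto dest: card_subset_eq)
  then show ?thesis
    by (simp add: subset_inv_gf_def cross_inv_def)
qed

lemma subsets_card_Suc_insert:
  assumes "finite C" "c \<notin> C"
  shows "{A. A \<subseteq> insert c C \<and> card A = Suc j} =
    {A. A \<subseteq> C \<and> card A = Suc j} \<union> insert c ` {A. A \<subseteq> C \<and> card A = j}"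
proof (intro equalityI subsetI)
  fix A assume A: "A \<in> {A. A \<subseteq> insert c C \<and> card A = Suc j}"
  show "A \<in> {A. A \<subseteq> C \<and> card A = Suc j} \<union> insert c ` {A. A \<subseteq> C \<and> card A = j}"
  proof (cases "c \<in> A")
    case True
    then have "A = insert c (A - {c})" "A - {c} \<subseteq> C" "card (A - {c}) = j"
      using A by auto
    then show ?thesis
      by blast
  qed (use A in auto)
next
  fix A assume "A \<in> {A. A \<subseteq> C \<and> card A = Suc j} \<union> insert c ` {A. A \<subseteq> C \<and> card A = j}"
  then consider "A \<subseteq> C" "card A = Suc j" | B where "A = insert c B" "B \<subseteq> C" "card B = j"
    by auto
  then show "A \<in> {A. A \<subseteq> insert c C \<and> card A = Suc j}"
  proof cases
    case 2
    then have "finite B" "c \<notin> B"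
      using assms finite_subset by auto
    then show ?thesis
      using 2 by auto
  qed auto
qed

lemma subset_inv_gf_insert_max:
  assumes "finite C" "\<forall>i \<in> C. i < c"
  shows "(subset_inv_gf (insert c C) (Suc j) :: 'a::field poly) =
    subset_inv_gf C (Suc j) + [:0, 1:] ^ (card C - j) * subset_inv_gf C j"
proof -
  have c: "c \<notin> C"
    using assms(2) by auto
  have fin: "finite A" if "A \<subseteq> C" for A
    using that assms(1) finite_subset by blast
  have "insert c C - A = insert c (C - A)" if "A \<subseteq> C" for A
    using that c by auto
  moreover have "{i \<in> A. c < i} = {}" if "A \<subseteq> C" for A
    using that assms(2) by force
  ultimately have without_c: "cross_inv A (insert c C - A) = cross_inv A (C - A)"
    if "A \<subseteq> C" for A
    using that fin[OF that] c by (simp add: cross_inv_insert_right)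
  have with_c: "cross_inv (insert c A) (C - A) = cross_inv A (C - A) + (card C - j)"
    if "A \<subseteq> C" "card A = j" for A
  proof -
    have "c \<notin> A" "{i \<in> C - A. i < c} = C - A"
      using that(1) c assms(2) by auto
    then show ?thesis
      using that fin[OF that(1)] by (simp add: cross_inv_insert_left card_Diff_subset)
  qed
  have "inj_on (insert c) {A. A \<subseteq> C \<and> card A = j}"
    using c by (auto simp: inj_on_def)
  then show ?thesis
    unfolding subset_inv_gf_def subsets_card_Suc_insert[OF assms(1) c]
    using c assms(1)
    by (subst sum.union_disjoint)
       (auto simp: sum.reindex without_c with_c power_add sum_distrib_left mult.commute
         intro!: sum.cong)
qed

lemma subset_inv_gf_qpoch:
  assumes "finite C" "j \<le> card C"
  shows "(subset_inv_gf C j :: 'a::field poly) * qpoch j * qpoch (card C - j) = qpoch (card C)"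
  using assms
proof (induction C arbitrary: j rule: finite_linorder_max_induct)
  case (insert c C)
  let ?q = "[:0, 1:] :: 'a poly"
  define n where "n = card C"
  have card: "card (insert c C) = Suc n"
    using insert.hyps by (auto simp: n_def)
  have "j \<le> Suc n"
    using insert.prems card by simp
  then consider (zero) "j = 0" | (top) "j = Suc n" | (middle) i where "j = Suc i" "i < n"
    by (cases j) (auto simp: le_less)
  then show ?case
  proof cases
    case zero
    then show ?thesis
      using insert.hyps by simp
  next
    case top
    then show ?thesis
      using insert.hyps card subset_inv_gf_card[of "insert c C", where 'a = 'a] by simp
  next
    case (middle i)
    then have "n - i = Suc (n - Suc i)"
      by simp
    then have split_poch: "qpoch (n - i) = qpoch (n - Suc i) * (1 - ?q ^ (n - i))"
      by (metis qpoch_Suc)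
    have IH: "subset_inv_gf C (Suc i) * qpoch (Suc i) * qpoch (n - Suc i) = (qpoch n :: 'a poly)"
      "subset_inv_gf C i * qpoch i * qpoch (n - i) = (qpoch n :: 'a poly)"
      using insert.IH \<open>i < n\<close> by (simp_all add: n_def)
    define p where "p = ?q ^ (n - i)"
    define t where "t = ?q ^ Suc i"
    have "p * t = ?q ^ Suc n"
      using \<open>i < n\<close> by (simp add: p_def t_def power_add[symmetric])
    have "subset_inv_gf (insert c C) j * qpoch j * qpoch (card (insert c C) - j) =
        (subset_inv_gf C (Suc i) + p * subset_inv_gf C i) * qpoch (Suc i) * qpoch (n - i)"
      using insert.hyps by (simp add: middle card subset_inv_gf_insert_max n_def p_def)
    also have "\<dots> = (subset_inv_gf C (Suc i) * qpoch (Suc i) * qpoch (n - Suc i)) * (1 - p) +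
        p * (subset_inv_gf C i * qpoch i * qpoch (n - i)) * (1 - t)"
      unfolding split_poch qpoch_Suc[of i] by (simp add: p_def t_def algebra_simps)
    also have "\<dots> = qpoch n * (1 - p * t)"
      unfolding IH by (simp add: algebra_simps)
    finally show ?thesis
      by (simp add: card qpoch_Suc \<open>p * t = ?q ^ Suc n\<close>)
  qed
qed simp

lemma qbinom_eq_subset_inv_gf:
  assumes "finite C" "j \<le> card C"
  shows "qbinom (card C) j = subset_inv_gf C j"
proof -
  have "qpoch (card C) = subset_inv_gf C j * (qpoch j * qpoch (card C - j))"
    using subset_inv_gf_qpoch[OF assms] by (metis mult.assoc)
  moreover have "(qpoch j * qpoch (card C - j) :: 'a poly) \<noteq> 0"
    by (simp add: qpoch_nonzero)
  ultimately show ?thesis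
    unfolding qbinom_def by (metis nonzero_mult_div_cancel_right)
qed

lemma sum_nonempty_subsets_cross_inv:
  fixes g :: "nat \<Rightarrow> 'a::field poly"
  assumes "finite C"
  shows "(\<Sum>A \<in> Pow C - {{}}. [:0, 1:] ^ cross_inv A (C - A) * g (card A)) =
    (\<Sum>j = 1..card C. qbinom (card C) j * g j)"
proof -
  have "card ` (Pow C - {{}}) \<subseteq> {1..card C}"
    using assms by (auto simp: Suc_le_eq card_gt_0_iff card_mono dest: finite_subset)
  then have "(\<Sum>A \<in> Pow C - {{}}. [:0, 1:] ^ cross_inv A (C - A) * g (card A)) =
      (\<Sum>j = 1..card C. \<Sum>A | A \<in> Pow C - {{}} \<and> card A = j. [:0, 1:] ^ cross_inv A (C - A) * g j)"
    using assms by (subst sum.group[symmetric]) (auto intro!: sum.cong)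
  also have "\<dots> = (\<Sum>j = 1..card C. subset_inv_gf C j * g j)"
    unfolding subset_inv_gf_def sum_distrib_right
    by (intro sum.cong refl) (auto intro!: sum.cong arg_cong[where f = "sum _"])
  finally show ?thesis
    using assms by (simp add: qbinom_eq_subset_inv_gf)
qed

lemma E2_on_root_sum:
  assumes "finite S" "S \<noteq> {}"
  defines "U \<equiv> S - {Min S}"
  shows "E2_on S x y = (\<Sum>A \<in> Pow (U - {Min U}). \<Sum>l \<in> andre_II_trees_on A.
    \<Sum>r \<in> andre_II_trees_on (U - A). tree_weight x y (Node l (Min S) r))"
proof -
  let ?P = "\<lambda>A. andre_II_trees_on A \<times> andre_II_trees_on (U - A)"
  have "finite U"
    using assms(1) by (simp add: U_def)
  then have fin: "finite (?P A)" if "A \<in> Pow (U - {Min U})" for A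
    using that by (auto intro: finite_andre_II_trees_on dest: finite_subset)
  have disj: "?P A \<inter> ?P B = {}" if "A \<noteq> B" for A B
    using that by (auto simp: andre_II_trees_on_def)
  have inj: "inj_on (\<lambda>(l, r). Node l (Min S) r) X" for X
    by (auto simp: inj_on_def)
  have "E2_on S x y = (\<Sum>(l, r) \<in> (\<Union>A \<in> Pow (U - {Min U}). ?P A). tree_weight x y (Node l (Min S) r))"
    unfolding E2_on_def andre_II_trees_on_split[OF assms(1,2), folded U_def] image_UN[symmetric]
    unfolding sum.reindex[OF inj] by (intro sum.cong) auto
  also have "\<dots> = (\<Sum>A \<in> Pow (U - {Min U}). \<Sum>(l, r) \<in> ?P A. tree_weight x y (Node l (Min S) r))"
    using \<open>finite U\<close> fin disj by (subst sum.UNION_disjoint) auto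
  finally show ?thesis
    by (simp add: sum.cartesian_product)
qed

lemma sum_root_with_left_labels:
  fixes x y :: "'a::field poly"
  assumes "finite U" "A \<subseteq> U - {Min U}" "A \<noteq> {}" "\<forall>i \<in> U. m < i"
  shows "(\<Sum>l \<in> andre_II_trees_on A. \<Sum>r \<in> andre_II_trees_on (U - A).
      tree_weight x y (Node l m r)) =
    [:0, 1:] ^ (2 * card A + cross_inv A (U - {Min U} - A)) * E2_on A x y * E2_on (U - A) x y"
proof -
  define C where "C = U - {Min U}"
  have "U \<noteq> {}"
    using assms(2,3) by auto
  then have "Min U \<in> U" "\<forall>i \<in> C. Min U < i"
    using assms(1) by (auto simp: C_def order.not_eq_order_implies_strict)
  then have "finite A" "U - A = insert (Min U) (C - A)" "{i \<in> A. Min U < i} = A"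
    using assms(1,2) by (auto simp: C_def dest: finite_subset)
  then have cross: "cross_inv A (U - A) = cross_inv A (C - A) + card A"
    by (simp add: cross_inv_insert_right C_def)
  have "tree_weight x y (Node l m r) =
      [:0, 1:] ^ (2 * card A + cross_inv A (C - A)) * (tree_weight x y l * tree_weight x y r)"
    if "l \<in> andre_II_trees_on A" "r \<in> andre_II_trees_on (U - A)" for l r
  proof -
    have "set_tree l = A" "set_tree r = U - A" "l \<noteq> Leaf" "r \<noteq> Leaf"
      using that assms(3) \<open>U - A = insert (Min U) (C - A)\<close> by (auto simp: andre_II_trees_on_def)
    moreover have "\<forall>i \<in> A. m < i" "m \<notin> U - A"
      using assms(2,4) by auto
    ultimately show ?thesis
      by (simp add: tree_weight_Node cross mult_2 add_ac mult.assoc)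
  qed
  then have "(\<Sum>l \<in> andre_II_trees_on A. \<Sum>r \<in> andre_II_trees_on (U - A).
      tree_weight x y (Node l m r)) =
    [:0, 1:] ^ (2 * card A + cross_inv A (C - A)) * (\<Sum>l \<in> andre_II_trees_on A.
      \<Sum>r \<in> andre_II_trees_on (U - A). tree_weight x y l * tree_weight x y r)"
    by (simp add: sum_distrib_left)
  then show ?thesis
    by (simp add: E2_on_def sum_product mult.assoc C_def)
qed

lemma E2_on_split:
  fixes x y :: "'a::field poly"
  assumes "finite S" "2 \<le> card S"
  defines "U \<equiv> S - {Min S}"
  defines "C \<equiv> U - {Min U}"
  shows "E2_on S x y = y * E2_on U x y +
    (\<Sum>A \<in> Pow C - {{}}. [:0, 1:] ^ (2 * card A + cross_inv A (C - A)) * E2_on A x y * E2_on (U - A) x y)"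
proof -
  have "S \<noteq> {}" "finite U" "finite C"
    using assms(1,2) by (auto simp: U_def C_def)
  have "U \<noteq> {}"
  proof
    assume "U = {}"
    then have "card S \<le> card {Min S}"
      using assms(1) by (intro card_mono) (auto simp: U_def)
    then show False
      using assms(2) by simp
  qed
  have minS: "\<forall>i \<in> U. Min S < i"
    using assms(1) by (auto simp: U_def order.not_eq_order_implies_strict)
  have empty_left: "(\<Sum>l \<in> andre_II_trees_on {}. \<Sum>r \<in> andre_II_trees_on (U - {}).
      tree_weight x y (Node l (Min S) r)) = y * E2_on U x y"
    using \<open>U \<noteq> {}\<close> unfolding E2_on_def sum_distrib_left
    by (auto intro!: sum.cong tree_weight_Node_Leaf)
  have "E2_on S x y = (\<Sum>A \<in> insert {} (Pow C - {{}}). \<Sum>l \<in> andre_II_trees_on A.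
      \<Sum>r \<in> andre_II_trees_on (U - A). tree_weight x y (Node l (Min S) r))"
    using E2_on_root_sum[OF assms(1) \<open>S \<noteq> {}\<close>] by (simp add: insert_absorb flip: U_def C_def)
  also have "\<dots> = (\<Sum>l \<in> andre_II_trees_on {}. \<Sum>r \<in> andre_II_trees_on (U - {}).
      tree_weight x y (Node l (Min S) r)) + (\<Sum>A \<in> Pow C - {{}}. \<Sum>l \<in> andre_II_trees_on A.
      \<Sum>r \<in> andre_II_trees_on (U - A). tree_weight x y (Node l (Min S) r))"
    using \<open>finite C\<close> by (intro sum.insert) auto
  also have "\<dots> = y * E2_on U x y +
      (\<Sum>A \<in> Pow C - {{}}. [:0, 1:] ^ (2 * card A + cross_inv A (C - A)) * E2_on A x y * E2_on (U - A) x y)"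
    unfolding empty_left C_def using sum_root_with_left_labels[OF \<open>finite U\<close> _ _ minS]
    by (intro sum.cong arg_cong2[where f = "(+)"]) auto
  finally show ?thesis .
qed

lemma E2_on_recursion:
  fixes x y :: "'a::field poly"
  assumes "finite S" "card S = n + 1" "n \<ge> 1"
    and smaller: "\<And>T. T \<subset> S \<Longrightarrow> T \<noteq> {} \<Longrightarrow> E2_on T x y = E2 (card T) x y"
  shows "E2_on S x y = y * E2 n x y +
    (\<Sum>j = 1..n - 1. [:0, 1:] ^ (2 * j) * qbinom (n - 1) j * E2 j x y * E2 (n - j) x y)"
proof -
  define U where "U = S - {Min S}"
  define C where "C = U - {Min U}"
  have "S \<noteq> {}" "2 \<le> card S"
    using assms(2,3) by auto
  then have "Min S \<in> S"
    using assms(1) by simp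
  then have "U \<subset> S" "card U = n" "finite U"
    using assms(1,2) by (auto simp: U_def)
  then have "U \<noteq> {}"
    using assms(3) by auto
  have "card C = n - 1" "finite C"
    using Min_in[OF \<open>finite U\<close> \<open>U \<noteq> {}\<close>] \<open>finite U\<close> \<open>card U = n\<close> by (simp_all add: C_def)
  have subtrees: "[:0, 1:] ^ (2 * card A + cross_inv A (C - A)) * E2_on A x y * E2_on (U - A) x y =
      [:0, 1:] ^ cross_inv A (C - A) * ([:0, 1:] ^ (2 * card A) * E2 (card A) x y * E2 (n - card A) x y)"
    if "A \<in> Pow C - {{}}" for A
  proof -
    have "A \<subseteq> C" "A \<noteq> {}"
      using that by auto
    then have "A \<subset> S" "U - A \<subset> S" "U - A \<noteq> {}"
      using \<open>U \<subset> S\<close> Min_in[OF \<open>finite U\<close> \<open>U \<noteq> {}\<close>] by (auto simp: C_def)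
    moreover have "A \<subseteq> U"
      using \<open>A \<subseteq> C\<close> by (auto simp: C_def)
    then have "card (U - A) = n - card A"
      using \<open>finite U\<close> \<open>card U = n\<close> by (simp add: card_Diff_subset finite_subset)
    ultimately show ?thesis
      using smaller \<open>A \<noteq> {}\<close> by (simp add: power_add mult_ac)
  qed
  have "E2_on S x y = y * E2_on U x y + (\<Sum>A \<in> Pow C - {{}}.
      [:0, 1:] ^ (2 * card A + cross_inv A (C - A)) * E2_on A x y * E2_on (U - A) x y)"
    using E2_on_split[OF assms(1) \<open>2 \<le> card S\<close>, folded U_def C_def] .
  also have "\<dots> = y * E2 n x y + (\<Sum>A \<in> Pow C - {{}}. [:0, 1:] ^ cross_inv A (C - A) *
      ([:0, 1:] ^ (2 * card A) * E2 (card A) x y * E2 (n - card A) x y))"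
    unfolding smaller[OF \<open>U \<subset> S\<close> \<open>U \<noteq> {}\<close>] \<open>card U = n\<close>
    by (intro arg_cong2[where f = "(+)"] refl sum.cong subtrees)
  also have "\<dots> = y * E2 n x y +
      (\<Sum>j = 1..n - 1. qbinom (n - 1) j * ([:0, 1:] ^ (2 * j) * E2 j x y * E2 (n - j) x y))"
    using sum_nonempty_subsets_cross_inv[OF \<open>finite C\<close>] \<open>card C = n - 1\<close> by simp
  finally show ?thesis
    by (simp add: mult_ac)
qed

lemma E2_on_eq_E2:
  assumes "finite S" "S \<noteq> {}"
  shows "E2_on S x y = E2 (card S) x y"
  using assms
proof (induction "card S" arbitrary: S rule: less_induct)
  case less
  have smaller: "E2_on T x y = E2 (card T) x y"
    if "T \<subset> S'" "T \<noteq> {}" "finite S'" "card S' = card S" for T S'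
  proof -
    have "finite T"
      using that(1,3) finite_subset by blast
    moreover have "card T < card S"
      using psubset_card_mono[OF that(3,1)] that(4) by simp
    ultimately show ?thesis
      using less.hyps that(2) by blast
  qed
  have "card S \<noteq> 0"
    using less.prems by simp
  then obtain n where n: "card S = n + 1"
    by (metis Suc_eq_plus1 not0_implies_Suc)
  show ?case
  proof (cases "n = 0")
    case True
    then obtain a where "S = {a}"
      using n card_1_singletonE by auto
    then show ?thesis
      by (simp add: E2_on_singleton E2_eq_E2_on)
  next
    case False
    let ?rhs = "y * E2 n x y +
      (\<Sum>j = 1..n - 1. [:0, 1:] ^ (2 * j) * qbinom (n - 1) j * E2 j x y * E2 (n - j) x y)"
    have "E2_on S x y = ?rhs"
      using False by (intro E2_on_recursion[OF less.prems(1) n])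
        (simp_all add: smaller[OF _ _ less.prems(1) refl])
    also have "?rhs = E2_on {1..n + 1} x y"
      using False by (intro E2_on_recursion[symmetric])
        (simp_all add: n smaller[of _ "{1..n + 1}"])
    finally show ?thesis
      by (simp add: E2_eq_E2_on n)
  qed
qed

lemma qbinom_symmetric: "k \<le> n \<Longrightarrow> qbinom n (n - k) = qbinom n k"
  by (simp add: qbinom_def mult.commute)

lemma E2_Suc_recursion:
  fixes x y :: "'a::field poly"
  assumes "n \<ge> 1"
  shows "E2 (n + 1) x y = y * E2 n x y +
    (\<Sum>j = 1..n - 1. [:0, 1:] ^ (2 * j) * qbinom (n - 1) j * E2 j x y * E2 (n - j) x y)"
proof -
  have subsets: "E2_on T x y = E2 (card T) x y" if "T \<subset> {1..n + 1}" "T \<noteq> {}" for T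
    using that by (meson E2_on_eq_E2 finite_atLeastAtMost finite_subset psubset_imp_subset)
  have "E2 (n + 1) x y = E2_on {1..n + 1} x y"
    by (simp add: E2_eq_E2_on)
  also have "\<dots> = y * E2 n x y +
      (\<Sum>j = 1..n - 1. [:0, 1:] ^ (2 * j) * qbinom (n - 1) j * E2 j x y * E2 (n - j) x y)"
    using assms subsets by (intro E2_on_recursion) simp_all
  finally show ?thesis .
qed

theorem theorem6p15:
  fixes x y :: "'a::field poly" and n :: nat
  assumes "n \<ge> 1"
  shows "E2 (n + 1) x y =
    y * E2 n x y +
    (\<Sum>k<n - 1. [:0, 1:] ^ (2 * (n - k - 1)) * qbinom (n - 1) k * E2 (k + 1) x y * E2 (n - k - 1) x y)"
proof -
  have "E2 (n + 1) x y = y * E2 n x y +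
      (\<Sum>j = 1..n - 1. [:0, 1:] ^ (2 * j) * qbinom (n - 1) j * E2 j x y * E2 (n - j) x y)"
    by (rule E2_Suc_recursion[OF assms])
  also have "(\<Sum>j = 1..n - 1. [:0, 1:] ^ (2 * j) * qbinom (n - 1) j * E2 j x y * E2 (n - j) x y) =
      (\<Sum>k<n - 1. [:0, 1:] ^ (2 * (n - k - 1)) * qbinom (n - 1) k * E2 (k + 1) x y * E2 (n - k - 1) x y)"
    unfolding lessThan_atLeast0 sum.atLeastLessThan_rev_at_least_Suc_atMost
  proof (intro sum.cong refl)
    fix j assume "j \<in> {Suc 0..n - 1}"
    then have reflect: "n - 1 + 0 - j + 1 = n - j" "n - (n - 1 + 0 - j) - 1 = j"
      "qbinom (n - 1) (n - 1 + 0 - j) = qbinom (n - 1) j"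
      using qbinom_symmetric[of j "n - 1"] by auto
    then show "[:0, 1:] ^ (2 * j) * qbinom (n - 1) j * E2 j x y * E2 (n - j) x y =
      [:0, 1:] ^ (2 * (n - (n - 1 + 0 - j) - 1)) * qbinom (n - 1) (n - 1 + 0 - j) *
        E2 (n - 1 + 0 - j + 1) x y * E2 (n - (n - 1 + 0 - j) - 1) x y"
      unfolding reflect by (simp only: mult_ac)
  qed simp
  finally show ?thesis .
qed

end
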